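(* Let $p,q\ge2$ and $n\ge1$. If $A\in\Lambda_1(p,n)$ and $B\in\Lambda_1(q,n)$, then $A\times B\in\Lambda_1(p+q-2,n)$.
   Context: Let $I_n=\{1,\dots,n\}$. A $d$-dimensional matrix of order $n$ is a function $I_n^d\to\mathbb R$; write $a_{i_1\cdots i_d}=A(i_1,\dots,i_d)$. A line is the set of positions obtained by varying one coordinate and fixing the others. $\Lambda_1(d,n)$ is the set of $(0,1)$-valued $d$-dimensional matrices of order $n$ with exactly one $1$ in each line. For a $p$-dimensional $A$ and a $q$-dimensional $B$ of order $n$, the product $A\times B$ is the $(p+q-2)$-dimensional matrix of order $n$ with $(A\times B)_{i_1\cdots i_{p+q-2}}=\sum_{j=1}^n a_{i_1\cdots i_{p-1}j}\,b_{j i_p\cdots i_{p+q-2}}$. *)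

theory Defs
  imports Complex_Main
begin

text \<open>A d-dimensional matrix of order n is modelled as a function on index lists
  (only its values on lists of length d with entries in {1..n} matter).\<close>
type_synonym mat = "nat list \<Rightarrow> real"

definition idx :: "nat \<Rightarrow> nat \<Rightarrow> nat list set" where
  "idx d n = {is. length is = d \<and> set is \<subseteq> {1..n}}"

definition Lambda1 :: "nat \<Rightarrow> nat \<Rightarrow> mat set" where
  "Lambda1 d n = {A. (\<forall>is\<in>idx d n. A is = 0 \<or> A is = 1) \<and>
     (\<forall>is\<in>idx d n. \<forall>k<d. card {j\<in>{1..n}. A (is[k := j]) = 1} = 1)}"

definition mprod :: "nat \<Rightarrow> nat \<Rightarrow> mat \<Rightarrow> mat \<Rightarrow> mat" where
  "mprod p n A B = (\<lambda>is. \<Sum>j=1..n. A (take (p - 1) is @ [j]) * B (j # drop (p - 1) is))"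

end

theory Submission
  imports Defs
begin

text \<open>A matrix \<open>A \<in> \<Lambda>\<^sub>1(d+1,n)\<close> is the graph of a function \<open>f : I\<^sub>n\<^sup>d \<rightarrow> I\<^sub>n\<close>:
  \<open>A(a,j) = 1 \<longleftrightarrow> j = f a\<close>, read off the lines in the last coordinate. Likewise
  \<open>B \<in> \<Lambda>\<^sub>1(e+1,n)\<close> has \<open>B(j,b) = 1 \<longleftrightarrow> j = g b\<close>. Hence \<open>(A \<times> B)(a,b) = B(f a, b)\<close>,
  which is \<open>1\<close> exactly when \<open>f a = g b\<close>, i.e. when \<open>A(a, g b) = 1\<close>. So a line of \<open>A \<times> B\<close>
  varying a coordinate of \<open>a\<close> is a line of \<open>A\<close> through \<open>(a, g b)\<close>, and one varying a
  coordinate of \<open>b\<close> is a line of \<open>B\<close> through \<open>(f a, b)\<close>.\<close>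

lemma idx_update: "xs \<in> idx d n \<Longrightarrow> j \<in> {1..n} \<Longrightarrow> xs[k := j] \<in> idx d n"
  unfolding idx_def using set_update_subset_insert by fastforce

lemma idx_snoc: "a \<in> idx d n \<Longrightarrow> j \<in> {1..n} \<Longrightarrow> a @ [j] \<in> idx (Suc d) n"
  by (auto simp: idx_def)

lemma idx_Cons: "b \<in> idx e n \<Longrightarrow> j \<in> {1..n} \<Longrightarrow> j # b \<in> idx (Suc e) n"
  by (auto simp: idx_def)

lemma idx_append_cases:
  assumes "xs \<in> idx (d + e) n"
  obtains a b where "a \<in> idx d n" "b \<in> idx e n" "xs = a @ b"
proof
  show "take d xs \<in> idx d n" "drop d xs \<in> idx e n"
    using assms by (auto simp: idx_def dest: in_set_takeD in_set_dropD)
qed simp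

lemma Lambda1_zero_one: "A \<in> Lambda1 d n \<Longrightarrow> xs \<in> idx d n \<Longrightarrow> A xs = 0 \<or> A xs = 1"
  unfolding Lambda1_def by blast

lemma Lambda1_line_card:
  "A \<in> Lambda1 d n \<Longrightarrow> xs \<in> idx d n \<Longrightarrow> k < d \<Longrightarrow> card {j\<in>{1..n}. A (xs[k := j]) = 1} = 1"
  unfolding Lambda1_def by blast

lemma Lambda1_line_ex1:
  assumes "A \<in> Lambda1 d n" "xs \<in> idx d n" "k < d"
  shows "\<exists>!j. j \<in> {1..n} \<and> A (xs[k := j]) = 1"
proof -
  obtain v where "{j\<in>{1..n}. A (xs[k := j]) = 1} = {v}"
    using Lambda1_line_card[OF assms] by (auto simp: card_1_singleton_iff)
  then show ?thesis
    by (metis (mono_tags, lifting) mem_Collect_eq singletonD singletonI)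
qed

definition one_pos_last :: "mat \<Rightarrow> nat \<Rightarrow> nat list \<Rightarrow> nat" where
  "one_pos_last A n a = (THE j. j \<in> {1..n} \<and> A (a @ [j]) = 1)"

definition one_pos_first :: "mat \<Rightarrow> nat \<Rightarrow> nat list \<Rightarrow> nat" where
  "one_pos_first B n b = (THE j. j \<in> {1..n} \<and> B (j # b) = 1)"

lemma one_pos_last:
  assumes "A \<in> Lambda1 (Suc d) n" "0 < n" "a \<in> idx d n"
  shows "one_pos_last A n a \<in> {1..n}"
    and "j \<in> {1..n} \<Longrightarrow> A (a @ [j]) = 1 \<longleftrightarrow> j = one_pos_last A n a"
proof -
  have "a @ [1] \<in> idx (Suc d) n"
    using assms by (intro idx_snoc) auto
  moreover have "length a = d"
    using assms(3) by (simp add: idx_def)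
  ultimately have ex1: "\<exists>!j. j \<in> {1..n} \<and> A (a @ [j]) = 1"
    using Lambda1_line_ex1[OF assms(1), of "a @ [1]" d] by (simp add: list_update_append)
  show "one_pos_last A n a \<in> {1..n}"
    using theI'[OF ex1] unfolding one_pos_last_def by blast
  show "A (a @ [j]) = 1 \<longleftrightarrow> j = one_pos_last A n a" if "j \<in> {1..n}"
    using ex1 that theI'[OF ex1] unfolding one_pos_last_def by blast
qed

lemma one_pos_first:
  assumes "B \<in> Lambda1 (Suc e) n" "0 < n" "b \<in> idx e n"
  shows "one_pos_first B n b \<in> {1..n}"
    and "j \<in> {1..n} \<Longrightarrow> B (j # b) = 1 \<longleftrightarrow> j = one_pos_first B n b"
proof -
  have "1 # b \<in> idx (Suc e) n"
    using assms by (intro idx_Cons) auto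
  then have ex1: "\<exists>!j. j \<in> {1..n} \<and> B (j # b) = 1"
    using Lambda1_line_ex1[OF assms(1), of "1 # b" 0] by simp
  show "one_pos_first B n b \<in> {1..n}"
    using theI'[OF ex1] unfolding one_pos_first_def by blast
  show "B (j # b) = 1 \<longleftrightarrow> j = one_pos_first B n b" if "j \<in> {1..n}"
    using ex1 that theI'[OF ex1] unfolding one_pos_first_def by blast
qed

lemma mprod_append:
  assumes A: "A \<in> Lambda1 (Suc d) n" and n: "0 < n" and a: "a \<in> idx d n"
  shows "mprod (Suc d) n A B (a @ b) = B (one_pos_last A n a # b)"
proof -
  have len: "length a = d"
    using a by (simp add: idx_def)
  have "A (a @ [j]) = (if j = one_pos_last A n a then 1 else 0)" if "j \<in> {1..n}" for j
    using Lambda1_zero_one[OF A idx_snoc[OF a that]] one_pos_last(2)[OF A n a that] by auto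
  then have "mprod (Suc d) n A B (a @ b)
      = (\<Sum>j=1..n. if j = one_pos_last A n a then B (j # b) else 0)"
    unfolding mprod_def using len by (intro sum.cong) auto
  also have "\<dots> = B (one_pos_last A n a # b)"
    using one_pos_last(1)[OF A n a] by (simp add: sum.delta')
  finally show ?thesis .
qed

lemma mprod_append_eq_1:
  assumes A: "A \<in> Lambda1 (Suc d) n" and B: "B \<in> Lambda1 (Suc e) n" and n: "0 < n"
    and a: "a \<in> idx d n" and b: "b \<in> idx e n"
  shows "mprod (Suc d) n A B (a @ b) = 1 \<longleftrightarrow> A (a @ [one_pos_first B n b]) = 1"
  using mprod_append[OF A n a] one_pos_first[OF B n b] one_pos_last[OF A n a] by metis

lemma mprod_line_left:
  assumes A: "A \<in> Lambda1 (Suc d) n" and B: "B \<in> Lambda1 (Suc e) n" and n: "0 < n"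
    and a: "a \<in> idx d n" and b: "b \<in> idx e n" and k: "k < d"
  shows "card {j\<in>{1..n}. mprod (Suc d) n A B ((a @ b)[k := j]) = 1} = 1"
proof -
  let ?g = "one_pos_first B n b"
  have len: "length a = d"
    using a by (simp add: idx_def)
  have "{j\<in>{1..n}. mprod (Suc d) n A B ((a @ b)[k := j]) = 1}
      = {j\<in>{1..n}. A ((a @ [?g])[k := j]) = 1}"
  proof (intro Collect_cong conj_cong refl)
    fix j assume "j \<in> {1..n}"
    then have "mprod (Suc d) n A B (a[k := j] @ b) = 1 \<longleftrightarrow> A (a[k := j] @ [?g]) = 1"
      using mprod_append_eq_1[OF A B n idx_update[OF a] b] by blast
    then show "mprod (Suc d) n A B ((a @ b)[k := j]) = 1 \<longleftrightarrow> A ((a @ [?g])[k := j]) = 1"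
      using k len by (simp add: list_update_append1)
  qed
  also have "card \<dots> = 1"
    using Lambda1_line_card[OF A idx_snoc[OF a one_pos_first(1)[OF B n b]]] k by simp
  finally show ?thesis .
qed

lemma mprod_line_right:
  assumes A: "A \<in> Lambda1 (Suc d) n" and B: "B \<in> Lambda1 (Suc e) n" and n: "0 < n"
    and a: "a \<in> idx d n" and b: "b \<in> idx e n" and k: "k < e"
  shows "card {j\<in>{1..n}. mprod (Suc d) n A B ((a @ b)[d + k := j]) = 1} = 1"
proof -
  let ?f = "one_pos_last A n a"
  have len: "length a = d"
    using a by (simp add: idx_def)
  have "{j\<in>{1..n}. mprod (Suc d) n A B ((a @ b)[d + k := j]) = 1}
      = {j\<in>{1..n}. B ((?f # b)[Suc k := j]) = 1}"
    using len mprod_append[OF A n a] by (simp add: list_update_append)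
  also have "card \<dots> = 1"
    using Lambda1_line_card[OF B idx_Cons[OF b one_pos_last(1)[OF A n a]], of "Suc k"] k by simp
  finally show ?thesis .
qed

theorem mprod_Lambda1:
  assumes A: "A \<in> Lambda1 (Suc d) n" and B: "B \<in> Lambda1 (Suc e) n" and n: "0 < n"
  shows "mprod (Suc d) n A B \<in> Lambda1 (d + e) n"
  unfolding Lambda1_def
proof (intro CollectI conjI ballI allI impI)
  fix xs assume "xs \<in> idx (d + e) n"
  then obtain a b where a: "a \<in> idx d n" and b: "b \<in> idx e n" and xs: "xs = a @ b"
    by (rule idx_append_cases)
  show "mprod (Suc d) n A B xs = 0 \<or> mprod (Suc d) n A B xs = 1"
    unfolding xs mprod_append[OF A n a]
    using Lambda1_zero_one[OF B idx_Cons[OF b one_pos_last(1)[OF A n a]]] .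
  fix k assume "k < d + e"
  then consider "k < d" | i where "i < e" "k = d + i"
    by (metis add_less_cancel_left le_Suc_ex not_le_imp_less)
  then show "card {j\<in>{1..n}. mprod (Suc d) n A B (xs[k := j]) = 1} = 1"
    by cases (use mprod_line_left[OF A B n a b] mprod_line_right[OF A B n a b] xs in auto)
qed

theorem corollary3p6:
  fixes p q n :: nat and A B :: mat
  assumes "p \<ge> 2" and "q \<ge> 2" and "n \<ge> 1"
    and "A \<in> Lambda1 p n" and "B \<in> Lambda1 q n"
  shows "mprod p n A B \<in> Lambda1 (p + q - 2) n"
proof -
  obtain d e where "p = Suc d" "q = Suc e"
    using assms(1,2) by (metis Suc_pred' not_numeral_le_zero not_gr_zero)
  then show ?thesis
    using mprod_Lambda1[of A d n B e] assms(3-5) by simp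
qed

end
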